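(* Let $T$ be a string of length $n$ and $1\le i\le j<n$, and suppose $\#\mathit{occ}_{T[i..j+1]}(\mathit{sqs}_{i,j+1})=2$. Then there are integers $p_l,p_s,q$ with $i\le p_l\le p_s\le q<j+1$ such that $T[p_s..q]=\mathit{sqs}_{i,j+1}$ and $T[p_l..q]=\mathit{lrs}_{i,j+1}$. Moreover, for these integers: (a) if there is no interval $[s',q+1]\in\mathsf{MUS}(T[i..j])$ (no MUS of $T[i..j]$ ending at $q+1$), then $[p_s,q+1]\in\mathsf{MUS}(T[i..j+1])$; (b) if there is no interval $[p_l-1,t']\in\mathsf{MUS}(T[i..j])$ (no MUS of $T[i..j]$ starting at $p_l-1$) and $p_l\ge i+1$, then $[p_l-1,q]\in\mathsf{MUS}(T[i..j+1])$.
   Context: $T[a..b]$ denotes the substring of $T$ from position $a$ to $b$. For strings $S,w$, $\#\mathit{occ}_S(w)$ is the number of positions at which $w$ occurs in $S$, with $\#\mathit{occ}_S(\varepsilon)=|S|+1$. A substring $w$ of $S$ is unique in $S$ if $\#\mathit{occ}_S(w)=1$ and repeating if $\#\mathit{occ}_S(w)\ge 2$. For $1\le i\le j\le n$, $\mathsf{MUS}(T[i..j])$ is the set of intervals $[s,t]$ (positions in $T$) with $i\le s\le t\le j$ such that $T[s..t]$ is unique in $T[i..j]$ and every proper substring of $T[s..t]$ (including the empty string) is repeating in $T[i..j]$. $\mathit{lrs}_{i,j}$ is the longest suffix of $T[i..j]$ occurring at least twice in $T[i..j]$ (possibly empty); $\mathit{sqs}_{i,j}$ is the shortest suffix of $T[i..j]$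 occurring at most twice in $T[i..j]$. *)

theory Defs
  imports Main "HOL-Library.Sublist"
begin

text \<open>Strings are lists; positions are 1-based. substr T a b is T[a..b]
  (empty if b < a).\<close>
definition substr :: "'a list \<Rightarrow> nat \<Rightarrow> nat \<Rightarrow> 'a list" where
  "substr T a b = map (\<lambda>k. T ! (k - 1)) [a..<b+1]"

text \<open>Number of occurrences of w in S (occ S [] = |S|+1).\<close>
definition occ :: "'a list \<Rightarrow> 'a list \<Rightarrow> nat" where
  "occ S w = card {k. k + length w \<le> length S \<and> take (length w) (drop k S) = w}"

definition unique_in :: "'a list \<Rightarrow> 'a list \<Rightarrow> bool" where
  "unique_in S w \<longleftrightarrow> occ S w = 1"

definition repeating_in :: "'a list \<Rightarrow> 'a list \<Rightarrow> bool" where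
  "repeating_in S w \<longleftrightarrow> occ S w \<ge> 2"

definition MUS :: "'a list \<Rightarrow> nat \<Rightarrow> nat \<Rightarrow> (nat \<times> nat) set" where
  "MUS T i j = {(s,t). i \<le> s \<and> s \<le> t \<and> t \<le> j
      \<and> unique_in (substr T i j) (substr T s t)
      \<and> (\<forall>w. sublist w (substr T s t) \<and> length w < length (substr T s t)
             \<longrightarrow> repeating_in (substr T i j) w)}"

definition suf :: "'a list \<Rightarrow> nat \<Rightarrow> 'a list" where
  "suf S l = drop (length S - l) S"

definition lrs_str :: "'a list \<Rightarrow> 'a list" where
  "lrs_str S = suf S (GREATEST l. l \<le> length S \<and> occ S (suf S l) \<ge> 2)"

definition sqs_str :: "'a list \<Rightarrow> 'a list" where
  "sqs_str S = suf S (LEAST l. l \<le> length S \<and> occ S (suf S l) \<le> 2)"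

definition lrs :: "'a list \<Rightarrow> nat \<Rightarrow> nat \<Rightarrow> 'a list" where
  "lrs T i j = lrs_str (substr T i j)"

definition sqs :: "'a list \<Rightarrow> nat \<Rightarrow> nat \<Rightarrow> 'a list" where
  "sqs T i j = sqs_str (substr T i j)"

end

theory Submission
  imports Defs
begin

(*
  Let U = T[i..j+1] and W = T[i..j], i.e. U without its last character. Suppose sqs occurs
  exactly twice in U: once as a suffix and once more, ending at some position e < |U| of U.
  Since sqs is a suffix of lrs, every occurrence of lrs ends with an occurrence of sqs, so lrs
  also occurs exactly twice and its inner occurrence ends at e as well; this determines p_l,
  p_s and q.

  (a) Extend the inner occurrence of sqs by the character following it. The result is unique
  in U, and dropping its last character gives sqs, which repeats. Dropping its first character
  also gives a repeating string: otherwise that string is unique in W, and its shortest unique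
  suffix is a MUS of W ending at q+1. Indeed, removing the last character of such a suffix
  leaves a suffix of U shorter than sqs, which occurs at least three times in U and hence at
  least twice in W.

  (b) Extend the inner occurrence of lrs by the character preceding it. By the maximality of
  lrs the result is unique in U, and dropping its first character gives lrs, which repeats.
  Dropping its last character also gives a repeating string: otherwise its shortest unique
  prefix is a MUS of W starting at p_l-1, since removing the first character of such a prefix
  leaves a proper prefix of lrs, which occurs in W inside both occurrences of lrs.
*)

section \<open>Occurrences and factors\<close>

definition occs :: "'a list \<Rightarrow> 'a list \<Rightarrow> nat set" where
  "occs S w = {k. k + length w \<le> length S \<and> take (length w) (drop k S) = w}"

definition factor :: "'a list \<Rightarrow> nat \<Rightarrow> nat \<Rightarrow> 'a list" where
  "factor U a l = take l (drop a U)"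

lemma occ_eq_card_occs: "occ S w = card (occs S w)"
  unfolding occ_def occs_def ..

lemma finite_occs [simp]: "finite (occs S w)"
  by (rule finite_subset[of _ "{..length S}"]) (auto simp: occs_def)

lemma length_factor [simp]: "a + l \<le> length U \<Longrightarrow> length (factor U a l) = l"
  by (simp add: factor_def)

lemma occs_iff_factor: "k \<in> occs U w \<longleftrightarrow> k + length w \<le> length U \<and> factor U k (length w) = w"
  by (simp add: occs_def factor_def)

lemma factor_eq_if_occs: "k \<in> occs U w \<Longrightarrow> factor U k (length w) = w"
  by (simp add: occs_iff_factor)

lemma factor_in_occs: "a + l \<le> length U \<Longrightarrow> a \<in> occs U (factor U a l)"
  by (simp add: occs_iff_factor factor_def)

lemma occs_append_middle:
  assumes "k \<in> occs U (p @ w @ s)" shows "k + length p \<in> occs U w"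
proof -
  have "take (length (p @ w @ s)) (drop k U) = p @ w @ s"
    using assms by (simp add: occs_def)
  then have "drop k U = p @ w @ s @ drop (length (p @ w @ s)) (drop k U)"
    by (metis append_assoc append_take_drop_id)
  then have "drop (k + length p) U = w @ s @ drop (length (p @ w @ s)) (drop k U)"
    by (metis add.commute append_eq_conv_conj drop_drop)
  then show ?thesis
    using assms by (auto simp: occs_def)
qed

lemma occs_appendD1: "k \<in> occs U (w @ s) \<Longrightarrow> k \<in> occs U w"
  using occs_append_middle[of k U "[]" w s] by simp

lemma occs_appendD2: "k \<in> occs U (p @ w) \<Longrightarrow> k + length p \<in> occs U w"
  using occs_append_middle[of k U p w "[]"] by simp

lemma occs_takeD: "k \<in> occs U w \<Longrightarrow> k \<in> occs U (take m w)"
  by (metis append_take_drop_id occs_appendD1)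

lemma occs_butlastD: "k \<in> occs U w \<Longrightarrow> k \<in> occs U (butlast w)"
  by (simp add: butlast_conv_take occs_takeD)

lemma occs_tlD: "k \<in> occs U w \<Longrightarrow> w \<noteq> [] \<Longrightarrow> Suc k \<in> occs U (tl w)"
  using occs_appendD2[of k U "[hd w]" "tl w"] by simp

lemma occ_antimono_sublist:
  assumes "sublist w v" shows "occ S v \<le> occ S w"
proof -
  obtain p s where v: "v = p @ w @ s"
    using assms by (auto simp: sublist_def)
  have "inj_on (\<lambda>k. k + length p) (occs S v)"
    by (auto simp: inj_on_def)
  moreover have "(\<lambda>k. k + length p) ` occs S v \<subseteq> occs S w"
    using occs_append_middle v by blast
  ultimately show ?thesis
    unfolding occ_eq_card_occs by (meson card_inj_on_le finite_occs)
qed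

lemma occ_Nil: "occ U [] = Suc (length U)"
proof -
  have "occs U [] = {..length U}"
    by (auto simp: occs_def)
  then show ?thesis
    by (simp add: occ_eq_card_occs)
qed

lemma occ_self: "occ U U = 1"
proof -
  have "occs U U = {0}"
    by (auto simp: occs_def)
  then show ?thesis
    by (simp add: occ_eq_card_occs)
qed

lemma occ_pos: "k \<in> occs U w \<Longrightarrow> 0 < occ U w"
  unfolding occ_eq_card_occs by (auto simp: card_gt_0_iff)

lemma two_le_occI: "k \<in> occs U w \<Longrightarrow> k' \<in> occs U w \<Longrightarrow> k \<noteq> k' \<Longrightarrow> 2 \<le> occ U w"
  unfolding occ_eq_card_occs by (metis card_2_iff card_mono empty_subsetI finite_occs insert_subset)

lemma other_occurrence:
  assumes "2 \<le> occ U w"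
  obtains k' where "k' \<in> occs U w" "k' \<noteq> k"
proof -
  have "\<not> occs U w \<subseteq> {k}"
    using assms card_mono[of "{k}" "occs U w"] by (auto simp: occ_eq_card_occs)
  then show thesis
    using that by blast
qed

lemma occs_in_butlast:
  "U \<noteq> [] \<Longrightarrow> occs (butlast U) w = {k \<in> occs U w. k + length w < length U}"
  by (cases U rule: rev_cases) (auto simp: occs_def drop_take min_def)

lemma occ_in_butlast_le: "U \<noteq> [] \<Longrightarrow> occ (butlast U) w \<le> occ U w"
  unfolding occ_eq_card_occs by (auto simp: occs_in_butlast intro: card_mono)

lemma occ_le_Suc_occ_in_butlast:
  assumes "U \<noteq> []" shows "occ U w \<le> Suc (occ (butlast U) w)"
proof -
  have "occs U w \<subseteq> insert (length U - length w) (occs (butlast U) w)"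
  proof
    fix k assume k: "k \<in> occs U w"
    then have "k + length w \<le> length U"
      by (simp add: occs_def)
    with k assms show "k \<in> insert (length U - length w) (occs (butlast U) w)"
      by (auto simp: occs_in_butlast)
  qed
  then have "card (occs U w) \<le> card (insert (length U - length w) (occs (butlast U) w))"
    by (intro card_mono) auto
  then show ?thesis
    unfolding occ_eq_card_occs by (simp add: card_insert_if split: if_splits)
qed

lemma factor_in_butlast: "a + l < length U \<Longrightarrow> factor (butlast U) a l = factor U a l"
  by (simp add: factor_def butlast_conv_take drop_take min_def)

lemma butlast_factor: "a + Suc l \<le> length U \<Longrightarrow> butlast (factor U a (Suc l)) = factor U a l"
  by (simp add: factor_def butlast_take min_def)

lemma tl_factor: "tl (factor U a (Suc l)) = factor U (Suc a) l"
  by (simp add: factor_def tl_take drop_Suc tl_drop)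

lemma drop_factor: "drop d (factor U a l) = factor U (a + d) (l - d)"
  by (simp add: factor_def drop_take add.commute)

lemma take_factor: "m \<le> l \<Longrightarrow> take m (factor U a l) = factor U a m"
  by (simp add: factor_def min_def)

lemma factor_eq_suf: "factor U (length U - l) l = suf U l"
  by (simp add: factor_def suf_def)

lemma length_suf: "l \<le> length U \<Longrightarrow> length (suf U l) = l"
  by (simp add: suf_def)

lemma drop_suf: "l \<le> length U \<Longrightarrow> drop d (suf U l) = suf U (l - d)"
  by (cases "d \<le> l") (simp_all add: suf_def add.commute)

section \<open>Minimal unique factors\<close>

definition minimal_unique :: "'a list \<Rightarrow> 'a list \<Rightarrow> bool" where
  "minimal_unique V X \<longleftrightarrow> unique_in V X
     \<and> (\<forall>w. sublist w X \<and> length w < length X \<longrightarrow> repeating_in V w)"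

lemma sublist_butlast_or_tl:
  assumes "sublist w X" "length w < length X"
  shows "sublist w (butlast X) \<or> sublist w (tl X)"
proof -
  obtain p s where X: "X = p @ w @ s"
    using assms(1) by (auto simp: sublist_def)
  show ?thesis
  proof (cases s rule: rev_cases)
    case Nil
    with assms(2) X obtain c p' where "p = c # p'"
      by (cases p) auto
    with X Nil have "tl X = p' @ w @ []"
      by simp
    then show ?thesis
      by (metis sublist_def)
  next
    case (snoc s' c)
    with X have "butlast X = p @ w @ s'"
      by (simp add: butlast_append)
    then show ?thesis
      by (metis sublist_def)
  qed
qed

lemma minimal_uniqueI:
  assumes "occ V X = 1" "2 \<le> occ V (butlast X)" "2 \<le> occ V (tl X)"
  shows "minimal_unique V X"
  unfolding minimal_unique_def unique_in_def repeating_in_def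
  using assms sublist_butlast_or_tl by (meson le_trans occ_antimono_sublist)

lemma minimal_unique_ending_at:
  assumes "x < y" "y \<le> length V" "occ V (factor V x (y - x)) \<le> 1"
    and suffixes_repeat: "\<And>s. x \<le> s \<Longrightarrow> s < y \<Longrightarrow> 2 \<le> occ V (factor V s (y - Suc s))"
  obtains s where "x \<le> s" "s < y" "minimal_unique V (factor V s (y - s))"
proof -
  define P where "P s \<longleftrightarrow> x \<le> s \<and> s \<le> y \<and> occ V (factor V s (y - s)) \<le> 1" for s
  define s where "s = Greatest P"
  have "P x"
    using assms by (simp add: P_def)
  then have "P s"
    unfolding s_def by (rule GreatestI_nat[of _ _ y]) (simp add: P_def)
  have s_max: "t \<le> s" if "P t" for t
    unfolding s_def using that by (rule Greatest_le_nat[of _ _ y]) (simp add: P_def)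
  have "s \<noteq> y"
    using \<open>P s\<close> assms(1,2) by (auto simp: P_def factor_def occ_Nil)
  with \<open>P s\<close> have s: "x \<le> s" "s < y"
    by (auto simp: P_def)
  have "occ V (factor V s (y - s)) = 1"
    using \<open>P s\<close> occ_pos[OF factor_in_occs, of s "y - s" V] s assms(2) by (simp add: P_def)
  moreover have "2 \<le> occ V (butlast (factor V s (y - s)))"
    using suffixes_repeat[OF s] butlast_factor[of s "y - Suc s" V] s assms(2)
    by (simp add: Suc_diff_Suc)
  moreover have "2 \<le> occ V (tl (factor V s (y - s)))"
  proof (rule ccontr)
    assume "\<not> 2 \<le> occ V (tl (factor V s (y - s)))"
    then have "P (Suc s)"
      using s tl_factor[of V s "y - Suc s"] by (simp add: P_def Suc_diff_Suc)
    then show False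
      using s_max by fastforce
  qed
  ultimately show thesis
    using that s minimal_uniqueI by blast
qed

lemma minimal_unique_starting_at:
  assumes "x < y" "y \<le> length V" "occ V (factor V x (y - x)) \<le> 1"
    and prefixes_repeat: "\<And>t. x < t \<Longrightarrow> t \<le> y \<Longrightarrow> 2 \<le> occ V (factor V (Suc x) (t - Suc x))"
  obtains t where "x < t" "t \<le> y" "minimal_unique V (factor V x (t - x))"
proof -
  define P where "P t \<longleftrightarrow> x \<le> t \<and> t \<le> y \<and> occ V (factor V x (t - x)) \<le> 1" for t
  define t where "t = Least P"
  have "P y"
    using assms by (simp add: P_def)
  then have "P t"
    unfolding t_def by (rule LeastI)
  have t_min: "\<not> P t'" if "t' < t" for t'
    using that unfolding t_def by (rule not_less_Least)
  have "t \<noteq> x"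
    using \<open>P t\<close> assms(1,2) by (auto simp: P_def factor_def occ_Nil)
  with \<open>P t\<close> have t: "x < t" "t \<le> y"
    by (auto simp: P_def)
  have "occ V (factor V x (t - x)) = 1"
    using \<open>P t\<close> occ_pos[OF factor_in_occs, of x "t - x" V] t assms(2) by (simp add: P_def)
  moreover have "2 \<le> occ V (butlast (factor V x (t - x)))"
  proof (rule ccontr)
    assume "\<not> 2 \<le> occ V (butlast (factor V x (t - x)))"
    then have "P (t - 1)"
      using t assms(2) butlast_factor[of x "t - 1 - x" V] by (auto simp: P_def Suc_diff_Suc)
    then show False
      using t_min t by simp
  qed
  moreover have "2 \<le> occ V (tl (factor V x (t - x)))"
    using prefixes_repeat[OF t] tl_factor[of V x "t - Suc x"] t by (simp add: Suc_diff_Suc)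
  ultimately show thesis
    using that t minimal_uniqueI by blast
qed

section \<open>The suffixes sqs and lrs\<close>

lemma sqs_str_least:
  shows "length (sqs_str U) \<le> length U" and "sqs_str U = suf U (length (sqs_str U))"
    and "l < length (sqs_str U) \<Longrightarrow> 2 < occ U (suf U l)"
proof -
  define P where "P l \<longleftrightarrow> l \<le> length U \<and> occ U (suf U l) \<le> 2" for l
  have "P (length U)"
    by (simp add: P_def suf_def occ_self)
  then have "P (Least P)"
    by (rule LeastI)
  moreover have sqs: "sqs_str U = suf U (Least P)"
    by (simp add: sqs_str_def P_def[abs_def])
  ultimately show "length (sqs_str U) \<le> length U" "sqs_str U = suf U (length (sqs_str U))"
    by (simp_all add: P_def length_suf)
  assume "l < length (sqs_str U)"
  then have "l < Least P"
    using \<open>P (Least P)\<close> sqs by (simp add: P_def length_suf)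
  then have "\<not> P l"
    by (rule not_less_Least)
  with \<open>l < Least P\<close> \<open>P (Least P)\<close> show "2 < occ U (suf U l)"
    by (simp add: P_def)
qed

lemma lrs_str_greatest:
  assumes "l \<le> length U" "2 \<le> occ U (suf U l)"
  shows "l \<le> length (lrs_str U)" and "length (lrs_str U) \<le> length U"
    and "2 \<le> occ U (lrs_str U)" and "lrs_str U = suf U (length (lrs_str U))"
    and "length (lrs_str U) < l' \<Longrightarrow> l' \<le> length U \<Longrightarrow> occ U (suf U l') < 2"
proof -
  define P where "P l \<longleftrightarrow> l \<le> length U \<and> 2 \<le> occ U (suf U l)" for l
  have bounded: "\<forall>l. P l \<longrightarrow> l \<le> length U"
    by (simp add: P_def)
  have "P l"
    using assms by (simp add: P_def)
  then have "P (Greatest P)" "l \<le> Greatest P"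
    using bounded by (auto intro: GreatestI_nat Greatest_le_nat)
  moreover have lrs: "lrs_str U = suf U (Greatest P)"
    by (simp add: lrs_str_def P_def[abs_def])
  ultimately show "l \<le> length (lrs_str U)" "length (lrs_str U) \<le> length U"
    "2 \<le> occ U (lrs_str U)" "lrs_str U = suf U (length (lrs_str U))"
    by (simp_all add: P_def length_suf)
  assume "length (lrs_str U) < l'" "l' \<le> length U"
  then show "occ U (suf U l') < 2"
    using \<open>P (Greatest P)\<close> lrs bounded Greatest_le_nat[of P l' "length U"]
    by (force simp: P_def length_suf)
qed

lemma occs_longer_repeating_suffix:
  assumes occs_s: "occs U (suf U s) = {a, length U - s}" and "a + s < length U"
    and "s \<le> l" "l \<le> length U" "2 \<le> occ U (suf U l)"
  shows "l \<le> a + s" and "occs U (suf U l) = {a + s - l, length U - l}"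
proof -
  define n L where "n = length U" and "L = suf U l"
  have shift: "k + (l - s) \<in> occs U (suf U s)" if "k \<in> occs U L" for k
  proof -
    have "drop (l - s) L = suf U s"
      using assms(3,4) drop_suf[of l U "l - s"] by (simp add: L_def)
    then have "k \<in> occs U (take (l - s) L @ suf U s)"
      using that by (metis append_take_drop_id)
    then show ?thesis
      using occs_appendD2 assms(4) by (fastforce simp: L_def length_suf)
  qed
  have in_L: "k + l \<le> n" if "k \<in> occs U L" for k
    using that assms(4) by (simp add: occs_def n_def L_def length_suf)
  have top_L: "n - l \<in> occs U L"
    using assms(4) factor_eq_suf[of U l] by (simp add: occs_iff_factor n_def L_def length_suf)
  obtain b where b: "b \<in> occs U L" "b \<noteq> n - l"
    using other_occurrence assms(5) by (metis L_def)
  have "b + (l - s) = a"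
    using shift[OF b(1)] occs_s in_L[OF b(1)] b(2) assms(3) by (auto simp: n_def)
  then show "l \<le> a + s"
    using assms(3) by simp
  have "occs U L \<subseteq> {a + s - l, n - l}"
  proof
    fix k assume k: "k \<in> occs U L"
    have "k + (l - s) \<in> {a, n - s}"
      using shift[OF k] occs_s by (simp add: n_def)
    then show "k \<in> {a + s - l, n - l}"
      using in_L[OF k] assms(3) by auto
  qed
  with b(1) top_L \<open>b + (l - s) = a\<close> assms(3) show "occs U (suf U l) = {a + s - l, length U - l}"
    by (auto simp: L_def n_def)
qed

lemma sqs_lrs_occurrences:
  assumes "1 < length U" "occ U (sqs_str U) = 2"
  obtains e where "e < length U" "0 < length (sqs_str U)"
    "length (sqs_str U) \<le> length (lrs_str U)" "length (lrs_str U) \<le> e"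
    "occs U (sqs_str U) = {e - length (sqs_str U), length U - length (sqs_str U)}"
    "occs U (lrs_str U) = {e - length (lrs_str U), length U - length (lrs_str U)}"
proof -
  define S L where "S = sqs_str U" and "L = lrs_str U"
  have S: "length S \<le> length U" "S = suf U (length S)"
    using sqs_str_least(1,2)[of U] by (simp_all add: S_def)
  have "S \<noteq> []"
    using assms by (auto simp: S_def occ_Nil)
  have "length U - length S \<in> occs U S"
    using S by (metis factor_eq_suf le_add_diff_inverse2 occs_iff_factor order_refl)
  moreover obtain a where a: "a \<in> occs U S" "a \<noteq> length U - length S"
    using other_occurrence assms(2) by (metis S_def order_refl)
  ultimately have occs_S: "occs U S = {a, length U - length S}"
    using assms(2) by (intro card_subset_eq[symmetric]) (auto simp: occ_eq_card_occs S_def)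
  have "a + length S < length U"
    using a by (auto simp: occs_def)
  moreover have L: "length S \<le> length L" "length L \<le> length U" "2 \<le> occ U L"
    "L = suf U (length L)"
    using lrs_str_greatest[of "length S" U] S assms(2) by (simp_all add: S_def L_def)
  ultimately have "length L \<le> a + length S"
    "occs U L = {a + length S - length L, length U - length L}"
    using occs_longer_repeating_suffix[of U "length S" a "length L"] occs_S S L by simp_all
  with that[of "a + length S"] \<open>a + length S < length U\<close> \<open>S \<noteq> []\<close> L(1) occs_S show thesis
    by (simp add: S_def L_def)
qed

section \<open>Extending the inner occurrences of sqs and lrs\<close>

lemma occs_right_extension:
  assumes occs_S: "occs U S = {a, length U - length S}" and a: "a + length S < length U"
  shows "occs U (factor U a (Suc (length S))) = {a}"
proof
  have "butlast (factor U a (Suc (length S))) = S"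
    using butlast_factor[of a "length S" U] factor_eq_if_occs[of a U S] occs_S a by simp
  then show "occs U (factor U a (Suc (length S))) \<subseteq> {a}"
    using occs_butlastD[of _ U "factor U a (Suc (length S))"] occs_S a
    by (fastforce simp: occs_iff_factor factor_def)
  show "{a} \<subseteq> occs U (factor U a (Suc (length S)))"
    using factor_in_occs[of a "Suc (length S)" U] a by simp
qed

lemma occ_in_butlast_inner_suffix:
  assumes occs_S: "occs U S = {a, length U - length S}" and a: "a + length S < length U"
    and shorter_suffixes: "\<And>l. l < length S \<Longrightarrow> 2 < occ U (suf U l)"
    and "a < s" "s \<le> a + length S"
  shows "2 \<le> occ (butlast U) (factor U s (a + length S - s))"
proof -
  have "a \<in> occs U S" "length U - length S \<in> occs U S"
    using occs_S by simp_all
  then have S_at_a: "factor U a (length S) = S" and S_suf: "S = suf U (length S)"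
    by (simp_all add: occs_iff_factor factor_eq_suf)
  have "factor U s (a + length S - s) = drop (s - a) S"
    using assms(4,5) drop_factor[of "s - a" U a "length S"] S_at_a by (simp add: add.commute)
  also have "\<dots> = suf U (length S - (s - a))"
    using drop_suf[of "length S" U "s - a"] a by (simp flip: S_suf)
  finally have "2 < occ U (factor U s (a + length S - s))"
    using shorter_suffixes[of "length S - (s - a)"] assms(4,5) by simp
  moreover have "U \<noteq> []"
    using a by auto
  ultimately show ?thesis
    using occ_le_Suc_occ_in_butlast[of U "factor U s (a + length S - s)"] by simp
qed

lemma occ_tl_right_extension:
  assumes occs_S: "occs U S = {a, length U - length S}" and a: "a + length S < length U"
    and "S \<noteq> []"
    and shorter_suffixes: "\<And>l. l < length S \<Longrightarrow> 2 < occ U (suf U l)"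
    and no_mus: "\<And>s. s \<le> a + length S \<Longrightarrow> Suc (a + length S) < length U
      \<Longrightarrow> \<not> minimal_unique (butlast U) (factor U s (Suc (a + length S) - s))"
  shows "2 \<le> occ U (factor U (Suc a) (length S))"
proof (cases "Suc (a + length S) = length U")
  case True
  then have "length U - length S = Suc a"
    by simp
  then have "factor U (Suc a) (length S) = suf U (length S)"
    using factor_eq_suf[of U "length S"] by simp
  moreover have "suf U (length S) = S"
    using factor_eq_if_occs[of "length U - length S" U S] occs_S by (simp add: factor_eq_suf)
  ultimately show ?thesis
    using occs_S a by (simp add: occ_eq_card_occs)
next
  case False
  define e V where "e = a + length S" and "V = butlast U"
  have e: "Suc e < length U"
    using False a by (simp add: e_def)
  have V_factor: "factor V s l = factor U s l" if "s + l < length U" for s l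
    using that factor_in_butlast by (simp add: V_def)
  show ?thesis
  proof (rule ccontr)
    assume "\<not> 2 \<le> occ U (factor U (Suc a) (length S))"
    then have "occ V (factor V (Suc a) (Suc e - Suc a)) \<le> 1"
      using V_factor[of "Suc a" "length S"] e occ_in_butlast_le[of U "factor U (Suc a) (length S)"]
      by (fastforce simp: V_def e_def)
    moreover have "2 \<le> occ V (factor V s (Suc e - Suc s))" if "Suc a \<le> s" "s < Suc e" for s
      using occ_in_butlast_inner_suffix[OF occs_S a shorter_suffixes, of s] that
        V_factor[of s "e - s"] e by (simp add: e_def V_def)
    moreover have "Suc e \<le> length V"
      using e by (simp add: V_def)
    ultimately obtain s where "Suc a \<le> s" "s < Suc e" "minimal_unique V (factor V s (Suc e - s))"
      using minimal_unique_ending_at[of "Suc a" "Suc e" V] \<open>S \<noteq> []\<close> by (auto simp: e_def)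
    then show False
      using no_mus[of s] V_factor[of s "Suc e - s"] e by (simp add: V_def e_def)
  qed
qed

lemma minimal_unique_right_extension:
  assumes occs_S: "occs U S = {a, length U - length S}" and a: "a + length S < length U"
    and "S \<noteq> []"
    and "\<And>l. l < length S \<Longrightarrow> 2 < occ U (suf U l)"
    and "\<And>s. s \<le> a + length S \<Longrightarrow> Suc (a + length S) < length U
      \<Longrightarrow> \<not> minimal_unique (butlast U) (factor U s (Suc (a + length S) - s))"
  shows "minimal_unique U (factor U a (Suc (length S)))"
proof (rule minimal_uniqueI)
  show "occ U (factor U a (Suc (length S))) = 1"
    using occs_right_extension[OF occs_S a] by (simp add: occ_eq_card_occs)
  have "butlast (factor U a (Suc (length S))) = S"
    using butlast_factor[of a "length S" U] factor_eq_if_occs[of a U S] occs_S a by simp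
  then show "2 \<le> occ U (butlast (factor U a (Suc (length S))))"
    using occs_S a by (simp add: occ_eq_card_occs)
  show "2 \<le> occ U (tl (factor U a (Suc (length S))))"
    using occ_tl_right_extension[OF assms] by (simp add: tl_factor)
qed

lemma occs_left_extension:
  assumes occs_L: "occs U L = {Suc c, length U - length L}" and c: "Suc c + length L < length U"
    and longer_suffix: "occ U (suf U (Suc (length L))) < 2"
  shows "occs U (factor U c (Suc (length L))) = {c}"
proof
  define n X where "n = length U" and "X = factor U c (Suc (length L))"
  have c_in: "c \<in> occs U X"
    using factor_in_occs[of c "Suc (length L)" U] c by (simp add: X_def)
  then show "{c} \<subseteq> occs U (factor U c (Suc (length L)))"
    by (simp add: X_def)
  have tl_X: "tl X = L"
    using tl_factor[of U c "length L"] factor_eq_if_occs[of "Suc c" U L] occs_L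
    by (simp add: X_def)
  show "occs U (factor U c (Suc (length L))) \<subseteq> {c}"
  proof
    fix k assume k: "k \<in> occs U (factor U c (Suc (length L)))"
    have "Suc k \<in> occs U L" "k + Suc (length L) \<le> n"
      using occs_tlD[of k U X] k tl_X c by (auto simp: occs_def X_def n_def factor_def)
    moreover have "Suc k \<noteq> n - length L"
    proof
      assume "Suc k = n - length L"
      then have "k = n - Suc (length L)" "k \<noteq> c"
        using c by (simp_all add: n_def)
      moreover have "X = factor U k (Suc (length L))"
        using k c by (simp add: occs_iff_factor X_def)
      ultimately have "X = suf U (Suc (length L))" "2 \<le> occ U X"
        using factor_eq_suf[of U "Suc (length L)"] two_le_occI[of k U X c] k c_in
        by (simp_all add: n_def X_def)
      then show False
        using longer_suffix by simp
    qed
    ultimately show "k \<in> {c}"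
      using occs_L by (auto simp: n_def)
  qed
qed

lemma occ_in_butlast_proper_prefix:
  assumes occs_L: "occs U L = {b, length U - length L}" and b: "b + length L < length U"
    and "m < length L"
  shows "2 \<le> occ (butlast U) (take m L)"
proof -
  have "U \<noteq> []"
    using b by auto
  have "b \<in> occs (butlast U) (take m L)" "length U - length L \<in> occs (butlast U) (take m L)"
    using occs_takeD[of b U L m] occs_takeD[of "length U - length L" U L m] occs_L assms(2,3)
      \<open>U \<noteq> []\<close> by (auto simp: occs_in_butlast)
  moreover have "b \<noteq> length U - length L"
    using b by simp
  ultimately show ?thesis
    by (rule two_le_occI)
qed

lemma occ_butlast_left_extension:
  assumes occs_L: "occs U L = {Suc c, length U - length L}" and c: "Suc c + length L < length U"
    and no_mus: "\<And>m. 0 < m \<Longrightarrow> c + m < length U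
      \<Longrightarrow> \<not> minimal_unique (butlast U) (factor U c m)"
  shows "2 \<le> occ U (factor U c (length L))"
proof (rule ccontr)
  define V where "V = butlast U"
  have "L \<noteq> []"
    using occs_L c by (auto simp: occs_def)
  have V_factor: "factor V s l = factor U s l" if "s + l < length U" for s l
    using that factor_in_butlast by (simp add: V_def)
  assume "\<not> 2 \<le> occ U (factor U c (length L))"
  then have "occ V (factor V c (c + length L - c)) \<le> 1"
    using V_factor[of c "length L"] c occ_in_butlast_le[of U "factor U c (length L)"]
    by (fastforce simp: V_def)
  moreover have "2 \<le> occ V (factor V (Suc c) (t - Suc c))" if "c < t" "t \<le> c + length L" for t
  proof -
    have "factor V (Suc c) (t - Suc c) = take (t - Suc c) L"
      using that c V_factor[of "Suc c" "t - Suc c"] take_factor[of "t - Suc c" "length L" U "Suc c"]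
        factor_eq_if_occs[of "Suc c" U L] occs_L by simp
    then show ?thesis
      using occ_in_butlast_proper_prefix[OF occs_L c, of "t - Suc c"] that by (simp add: V_def)
  qed
  moreover have "c + length L \<le> length V"
    using c by (simp add: V_def)
  ultimately obtain t where "c < t" "t \<le> c + length L" "minimal_unique V (factor V c (t - c))"
    using minimal_unique_starting_at[of c "c + length L" V] \<open>L \<noteq> []\<close> by auto
  then show False
    using no_mus[of "t - c"] V_factor[of c "t - c"] c by (simp add: V_def)
qed

lemma minimal_unique_left_extension:
  assumes occs_L: "occs U L = {Suc c, length U - length L}" and c: "Suc c + length L < length U"
    and "occ U (suf U (Suc (length L))) < 2"
    and "\<And>m. 0 < m \<Longrightarrow> c + m < length U
      \<Longrightarrow> \<not> minimal_unique (butlast U) (factor U c m)"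
  shows "minimal_unique U (factor U c (Suc (length L)))"
proof (rule minimal_uniqueI)
  show "occ U (factor U c (Suc (length L))) = 1"
    using occs_left_extension[OF occs_L c assms(3)] by (simp add: occ_eq_card_occs)
  show "2 \<le> occ U (butlast (factor U c (Suc (length L))))"
    using occ_butlast_left_extension[OF occs_L c assms(4)] butlast_factor[of c "length L" U] c
    by simp
  have "tl (factor U c (Suc (length L))) = L"
    using tl_factor[of U c "length L"] factor_eq_if_occs[of "Suc c" U L] occs_L by simp
  then show "2 \<le> occ U (tl (factor U c (Suc (length L))))"
    using occs_L c by (simp add: occ_eq_card_occs)
qed

lemma length_substr [simp]: "length (substr T a b) = Suc b - a"
  by (simp add: substr_def del: upt_Suc)

lemma substr_eq_factor: "i \<le> a \<Longrightarrow> b \<le> J \<Longrightarrow> substr T a b = factor (substr T i J) (a - i) (Suc b - a)"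
  by (cases "a \<le> Suc b") (simp_all add: substr_def factor_def take_map drop_map del: upt_Suc)

lemma butlast_substr: "i \<le> Suc j \<Longrightarrow> butlast (substr T i (Suc j)) = substr T i j"
  by (simp add: substr_def flip: map_butlast)

lemma mem_MUS_iff_factor:
  assumes "i \<le> s" "s \<le> t" "t \<le> J" "J \<le> K"
  shows "(s, t) \<in> MUS T i J \<longleftrightarrow>
    minimal_unique (substr T i J) (factor (substr T i K) (s - i) (Suc t - s))"
proof -
  have "substr T s t = factor (substr T i K) (s - i) (Suc t - s)"
    using assms by (intro substr_eq_factor) auto
  then show ?thesis
    using assms by (simp add: MUS_def minimal_unique_def)
qed

lemma substr_eq_occurrence:
  assumes "c \<in> occs (substr T i J) w" "w \<noteq> []"
  shows "substr T (c + i) (c + length w + i - 1) = w"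
proof -
  have "c + length w \<le> Suc J - i" "0 < length w"
    using assms by (auto simp: occs_def)
  then have "c + length w + i - 1 \<le> J"
    by linarith
  then show ?thesis
    using assms substr_eq_factor[of i "c + i" "c + length w + i - 1" J T]
    by (simp add: occs_iff_factor)
qed

lemma substr_occurrence_not_at_end:
  assumes "occs (substr T i J) w = {c, Suc J - i - length w}"
    and "i \<le> p" "p \<le> q" "q < J" "substr T p q = w"
  shows "p = c + i" and "Suc q = c + length w + i"
proof -
  have "length w = Suc q - p"
    using assms(5) by auto
  then have "p - i \<in> occs (substr T i J) w"
    using assms(2-5) substr_eq_factor[of i p q J T] by (simp add: occs_iff_factor)
  moreover have "p - i \<noteq> Suc J - i - length w"
    using assms(2-5) by auto
  ultimately have "p - i = c"
    using assms(1) by blast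
  then show "p = c + i" "Suc q = c + length w + i"
    using assms(2-5) by auto
qed

lemma sqs_lrs_common_end:
  assumes "i \<le> j" and "occ (substr T i (Suc j)) (sqs T i (Suc j)) = 2"
  shows "\<exists>pl ps q. i \<le> pl \<and> pl \<le> ps \<and> ps \<le> q \<and> q < Suc j
    \<and> substr T ps q = sqs T i (Suc j) \<and> substr T pl q = lrs T i (Suc j)"
proof -
  define U S L where "U = substr T i (Suc j)" and "S = sqs_str U" and "L = lrs_str U"
  have "1 < length U" "occ U (sqs_str U) = 2"
    using assms by (simp_all add: U_def sqs_def)
  then obtain e where e: "e < length U" "0 < length S" "length S \<le> length L" "length L \<le> e"
    and occs_S: "occs U S = {e - length S, length U - length S}"
    and occs_L: "occs U L = {e - length L, length U - length L}"
    unfolding S_def L_def by (rule sqs_lrs_occurrences)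
  moreover have "S \<noteq> []" "L \<noteq> []"
    using e(2,3) by auto
  ultimately have "substr T (e - length S + i) (e + i - 1) = S"
    "substr T (e - length L + i) (e + i - 1) = L"
    using substr_eq_occurrence[of "e - length S" T i "Suc j" S]
      substr_eq_occurrence[of "e - length L" T i "Suc j" L]
    by (simp_all add: U_def)
  moreover have "e - length L + i \<le> e - length S + i" "e - length S + i \<le> e + i - 1"
    "e + i - 1 < Suc j"
    using e length_substr[of T i "Suc j"] unfolding U_def by arith+
  ultimately show ?thesis
    unfolding sqs_def lrs_def U_def [symmetric] S_def [symmetric] L_def [symmetric]
    by (meson le_add2)
qed

lemma MUS_sqs_extension:
  assumes "i \<le> j" and twice: "occ (substr T i (Suc j)) (sqs T i (Suc j)) = 2"
    and "i \<le> ps" "ps \<le> q" "q < Suc j" "substr T ps q = sqs T i (Suc j)"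
    and no_mus: "\<not> (\<exists>s'. (s', Suc q) \<in> MUS T i j)"
  shows "(ps, Suc q) \<in> MUS T i (Suc j)"
proof -
  define U S L where "U = substr T i (Suc j)" and "S = sqs_str U" and "L = lrs_str U"
  have "1 < length U" "occ U (sqs_str U) = 2"
    using assms(1) twice by (simp_all add: U_def sqs_def)
  then obtain e where e: "e < length U" "0 < length S" "length S \<le> length L" "length L \<le> e"
    and occs_S: "occs U S = {e - length S, length U - length S}"
    and occs_L: "occs U L = {e - length L, length U - length L}"
    unfolding S_def L_def by (rule sqs_lrs_occurrences)
  have "ps = e - length S + i" "Suc q = e + i"
    using substr_occurrence_not_at_end[of T i "Suc j" S "e - length S" ps q] assms(3-6) occs_S e
    by (simp_all add: U_def S_def sqs_def)
  have "minimal_unique U (factor U (e - length S) (Suc (length S)))"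
  proof (rule minimal_unique_right_extension)
    fix s assume "s \<le> e - length S + length S" "Suc (e - length S + length S) < length U"
    then show "\<not> minimal_unique (butlast U) (factor U s (Suc (e - length S + length S) - s))"
      using no_mus mem_MUS_iff_factor[of i "s + i" "Suc q" j "Suc j" T] assms(1) e(3,4)
        \<open>Suc q = e + i\<close> by (auto simp: U_def butlast_substr)
  qed (use e occs_S sqs_str_least(3) in \<open>auto simp: S_def\<close>)
  then show ?thesis
    using mem_MUS_iff_factor[of i ps "Suc q" "Suc j" "Suc j" T] assms(3-5) e
      \<open>ps = _\<close> \<open>Suc q = _\<close> by (simp add: U_def)
qed

lemma MUS_lrs_extension:
  assumes "i \<le> j" and twice: "occ (substr T i (Suc j)) (sqs T i (Suc j)) = 2"
    and "i < pl" "pl \<le> q" "q < Suc j" "substr T pl q = lrs T i (Suc j)"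
    and no_mus: "\<not> (\<exists>t'. (pl - 1, t') \<in> MUS T i j)"
  shows "(pl - 1, q) \<in> MUS T i (Suc j)"
proof -
  define U S L where "U = substr T i (Suc j)" and "S = sqs_str U" and "L = lrs_str U"
  have "1 < length U" "occ U (sqs_str U) = 2"
    using assms(1) twice by (simp_all add: U_def sqs_def)
  then obtain e where e: "e < length U" "0 < length S" "length S \<le> length L" "length L \<le> e"
    and occs_S: "occs U S = {e - length S, length U - length S}"
    and occs_L: "occs U L = {e - length L, length U - length L}"
    unfolding S_def L_def by (rule sqs_lrs_occurrences)
  have "pl = e - length L + i" "Suc q = e + i"
    using substr_occurrence_not_at_end[of T i "Suc j" L "e - length L" pl q] assms(3-6) occs_L e
    by (simp_all add: U_def L_def lrs_def)
  define c where "c = pl - 1 - i"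
  have c: "Suc c = e - length L" "c + i = pl - 1" "pl - 1 - i = c" "Suc q - (pl - 1) = Suc (length L)"
    using assms(3) \<open>pl = _\<close> \<open>Suc q = _\<close> e(4) by (auto simp: c_def)
  have "occ U (suf U (Suc (length L))) < 2"
    using lrs_str_greatest(5)[of "length S" U] sqs_str_least(1,2)[of U] twice e(1,4)
    by (simp add: U_def S_def L_def sqs_def)
  then have "minimal_unique U (factor U c (Suc (length L)))"
  proof (intro minimal_unique_left_extension)
    fix m assume "0 < m" "c + m < length U"
    moreover define t where "t = c + m - 1 + i"
    ultimately have "pl - 1 \<le> t" "t \<le> j" "Suc t - (pl - 1) = m"
      using c by (simp_all add: U_def)
    then show "\<not> minimal_unique (butlast U) (factor U c m)"
      using no_mus mem_MUS_iff_factor[of i "pl - 1" t j "Suc j" T] assms(1,3) c(3)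
      by (auto simp: U_def butlast_substr)
  qed (use e occs_L c in auto)
  then show ?thesis
    using mem_MUS_iff_factor[of i "pl - 1" q "Suc j" "Suc j" T] assms(3-5) c by (simp add: U_def)
qed

theorem lemma6:
  fixes T :: "'a list" and i j :: nat
  assumes "1 \<le> i" and "i \<le> j" and "j < length T"
    and "occ (substr T i (j+1)) (sqs T i (j+1)) = 2"
  shows "(\<exists>pl ps q. i \<le> pl \<and> pl \<le> ps \<and> ps \<le> q \<and> q < j + 1
            \<and> substr T ps q = sqs T i (j+1) \<and> substr T pl q = lrs T i (j+1))
       \<and> (\<forall>pl ps q. i \<le> pl \<and> pl \<le> ps \<and> ps \<le> q \<and> q < j + 1
            \<and> substr T ps q = sqs T i (j+1) \<and> substr T pl q = lrs T i (j+1) \<longrightarrow>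
            ((\<not> (\<exists>s'. (s', q+1) \<in> MUS T i j)) \<longrightarrow> (ps, q+1) \<in> MUS T i (j+1))
          \<and> ((\<not> (\<exists>t'. (pl - 1, t') \<in> MUS T i j)) \<and> i + 1 \<le> pl
               \<longrightarrow> (pl - 1, q) \<in> MUS T i (j+1)))"
proof -
  have twice: "occ (substr T i (Suc j)) (sqs T i (Suc j)) = 2"
    using assms(4) by simp
  show ?thesis
  proof (intro conjI allI impI)
    show "\<exists>pl ps q. i \<le> pl \<and> pl \<le> ps \<and> ps \<le> q \<and> q < j + 1
      \<and> substr T ps q = sqs T i (j + 1) \<and> substr T pl q = lrs T i (j + 1)"
      using sqs_lrs_common_end[OF assms(2) twice] by simp
  next
    fix pl ps q
    assume pos: "i \<le> pl \<and> pl \<le> ps \<and> ps \<le> q \<and> q < j + 1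
      \<and> substr T ps q = sqs T i (j + 1) \<and> substr T pl q = lrs T i (j + 1)"
    {
      assume "\<not> (\<exists>s'. (s', q + 1) \<in> MUS T i j)"
      then show "(ps, q + 1) \<in> MUS T i (j + 1)"
        using MUS_sqs_extension[OF assms(2) twice, of ps q] pos by simp
    next
      assume "\<not> (\<exists>t'. (pl - 1, t') \<in> MUS T i j) \<and> i + 1 \<le> pl"
      then show "(pl - 1, q) \<in> MUS T i (j + 1)"
        using MUS_lrs_extension[OF assms(2) twice, of pl q] pos by simp
    }
  qed
qed

end
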